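(* For every instance of (weighted) Maximum Coverage with covering multiplicity $r$, the greedy algorithm (with arbitrary tie-breaking) outputs $k$ sets whose union has weight at least $\left(1-(1-1/r)^r\right)$ times the optimum weight.
   Context: An instance of weighted Maximum Coverage is $({U},\mathcal{R},k)$ with ${U}$ finite, $\mathcal{R}$ a collection of subsets of ${U}$, $k$ a positive integer, and weights $w:{U}\to\mathbb{R}_{\ge0}$, with $w(S)=\sum_{x\in S}w(x)$; the goal is to choose $k$ sets of $\mathcal{R}$ maximizing the weight of their union (the unweighted problem is the case $w\equiv1$). The greedy algorithm chooses $k$ sets sequentially, each new set maximizing the weight of the elements it covers that are not covered by previously chosen sets. The instance has covering multiplicity $r$ if for every $k$-tuple of sets $a_1,\dots,a_k\in\mathcal{R}$ there exists an optimal solution $(o_1,\dots,o_k)$, with union denoted $OPT$, such that each set $a_i\cap OPT$ ($1\le i\le k$) is contained in the union of some $r$ elements of $\{o_1,\dots,o_k\}$. *)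

theory Defs
  imports Complex_Main
begin

text \<open>Weighted Maximum Coverage instance (U, R, k) with weights w.
  A choice of k sets is a function from indices i < k into R (repetitions allowed).\<close>

definition wt :: "('a \<Rightarrow> real) \<Rightarrow> 'a set \<Rightarrow> real" where
  "wt w S = (\<Sum>x\<in>S. w x)"

definition mc_instance :: "'a set \<Rightarrow> 'a set set \<Rightarrow> nat \<Rightarrow> ('a \<Rightarrow> real) \<Rightarrow> bool" where
  "mc_instance U R k w \<longleftrightarrow> finite U \<and> (\<forall>S\<in>R. S \<subseteq> U) \<and> 0 < k \<and> (\<forall>x\<in>U. 0 \<le> w x)"

definition is_choice :: "'a set set \<Rightarrow> nat \<Rightarrow> (nat \<Rightarrow> 'a set) \<Rightarrow> bool" where
  "is_choice R k a \<longleftrightarrow> (\<forall>i<k. a i \<in> R)"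

definition union_of :: "nat \<Rightarrow> (nat \<Rightarrow> 'a set) \<Rightarrow> 'a set" where
  "union_of k a = (\<Union>i<k. a i)"

definition is_optimal :: "'a set set \<Rightarrow> nat \<Rightarrow> ('a \<Rightarrow> real) \<Rightarrow> (nat \<Rightarrow> 'a set) \<Rightarrow> bool" where
  "is_optimal R k w opt \<longleftrightarrow> is_choice R k opt \<and>
     (\<forall>a. is_choice R k a \<longrightarrow> wt w (union_of k a) \<le> wt w (union_of k opt))"

definition covering_multiplicity :: "'a set set \<Rightarrow> nat \<Rightarrow> ('a \<Rightarrow> real) \<Rightarrow> nat \<Rightarrow> bool" where
  "covering_multiplicity R k w r \<longleftrightarrow>
     (\<forall>a. is_choice R k a \<longrightarrow>
        (\<exists>opt. is_optimal R k w opt \<and>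
           (\<forall>i<k. \<exists>J. J \<subseteq> {..<k} \<and> card J \<le> r \<and>
                a i \<inter> union_of k opt \<subseteq> (\<Union>j\<in>J. opt j))))"

definition greedy_run :: "'a set set \<Rightarrow> nat \<Rightarrow> ('a \<Rightarrow> real) \<Rightarrow> (nat \<Rightarrow> 'a set) \<Rightarrow> bool" where
  "greedy_run R k w g \<longleftrightarrow> (\<forall>i<k. g i \<in> R \<and>
     (\<forall>S\<in>R. wt w (S - union_of i g) \<le> wt w (g i - union_of i g)))"

end

theory Submission
  imports Defs
begin

(* Applying covering multiplicity to the greedy tuple g yields an optimal solution ob such that
   each g i meets OPT only inside the union of a set J i of at most r optimal sets.  Assign every
   element of OPT to an owner set containing it, taken from J i if the element is first covered in
   round i.  Let u i j be the weight of the part of owner class j still uncovered before round i and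
   gam i the gain of round i.  These form a charging game: values only decrease, in round i only the
   classes in J i change, and both each u i j (by greediness) and their total decrease are at most
   gam i.  The game is analysed with the potential \<Sum>j lam(s j) * u i j, where lam interpolates
   n \<mapsto> 1 - (1 - 1/r)^n linearly and s is a budget vector: each round can spend r units of
   budget so that the potential drops by at most gam i.  Starting with budget r on each of the k
   classes gives (1 - (1 - 1/r)^r) * w(OPT) \<le> \<Sum>i gam i = w(greedy union). *)

(* The piecewise linear interpolation of n \<mapsto> 1 - (1 - 1/R)^n: on [n, n+1] it is the
   segment joining the values at n and n+1.  It is the coefficient function of the potential. *)
definition lam :: "real \<Rightarrow> real \<Rightarrow> real" where
  "lam R x = 1 - (1 - 1/R) ^ nat \<lfloor>x\<rfloor> * (1 - (x - of_int \<lfloor>x\<rfloor>) / R)"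

(* The line extending the linear piece of lam on [t, t+1]; its slope is (1 - 1/R)^t / R. *)
definition piece_line :: "real \<Rightarrow> nat \<Rightarrow> real \<Rightarrow> real" where
  "piece_line R t x = 1 - (1 - 1/R) ^ t + (x - real t) * (1 - 1/R) ^ t / R"

lemma floor_decomposition:
  fixes x :: real
  assumes "0 \<le> x"
  shows "x = real (nat \<lfloor>x\<rfloor>) + (x - of_int \<lfloor>x\<rfloor>)" "0 \<le> x - of_int \<lfloor>x\<rfloor>" "x - of_int \<lfloor>x\<rfloor> < 1"
  using assms by (auto simp: floor_less_cancel)

lemma lam_of_nat: "lam R (real m) = 1 - (1 - 1/R) ^ m"
  by (simp add: lam_def)

lemma lam_zero: "lam R 0 = 0"
  using lam_of_nat[of R 0] by simp

lemma ratio_bounds: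
  fixes R :: real
  assumes "1 \<le> R"
  shows "0 \<le> 1 - 1/R" "1 - 1/R \<le> 1"
  using assms by (simp_all add: field_simps)

lemma lam_nonneg:
  assumes R: "1 \<le> R" and x: "0 \<le> x"
  shows "0 \<le> lam R x"
proof -
  define th where "th = x - of_int \<lfloor>x\<rfloor>"
  have th: "0 \<le> th" "th < 1" using floor_decomposition[OF x] th_def by auto
  have "(1 - 1/R) ^ nat \<lfloor>x\<rfloor> \<le> 1" "0 \<le> (1 - 1/R) ^ nat \<lfloor>x\<rfloor>"
    using ratio_bounds[OF R] by (simp_all add: power_le_one)
  moreover have "0 \<le> 1 - th / R" "1 - th / R \<le> 1" using th R by (auto simp: field_simps)
  ultimately have "(1 - 1/R) ^ nat \<lfloor>x\<rfloor> * (1 - th / R) \<le> 1"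
    using mult_le_one by blast
  then show ?thesis unfolding lam_def th_def by simp
qed

lemma lam_eq_piece_line:
  assumes "0 \<le> x"
  shows "lam R x = piece_line R (nat \<lfloor>x\<rfloor>) x"
proof -
  have "real (nat \<lfloor>x\<rfloor>) = of_int \<lfloor>x\<rfloor>" using assms by simp
  then show ?thesis unfolding piece_line_def lam_def by (simp add: field_simps)
qed

lemma piece_line_shift: "piece_line R t z = piece_line R t y + (z - y) * (1 - 1/R) ^ t / R"
  unfolding piece_line_def by (simp add: add_divide_distrib[symmetric] algebra_simps)

lemma bernoulli_ratio:
  fixes R th :: real
  assumes R: "1 \<le> R" and th: "0 \<le> th" "th \<le> 1"
  shows "1 - (real d + th) / R \<le> (1 - 1/R) ^ d * (1 - th / R)"
proof -
  have Rp: "0 < R" using R by simp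
  have "1 + real d * (- (1/R)) \<le> (1 + (- (1/R))) ^ d"
    by (rule Bernoulli_inequality) (use R in \<open>auto simp: field_simps\<close>)
  then have "1 - real d / R \<le> (1 - 1/R) ^ d" by simp
  moreover have "0 \<le> 1 - th / R" using th R by (auto simp: field_simps)
  ultimately have "(1 - real d / R) * (1 - th / R) \<le> (1 - 1/R) ^ d * (1 - th / R)"
    by (rule mult_right_mono)
  moreover have "1 - (real d + th) / R \<le> (1 - real d / R) * (1 - th / R)"
  proof -
    have "0 \<le> real d * th / (R * R)" using th Rp by simp
    then show ?thesis using Rp by (simp add: field_simps)
  qed
  ultimately show ?thesis by linarith
qed

(* Concavity of lam: it lies below the extension of its own piece and of every earlier one,
   and also below the line of the next piece. *)
lemma lam_le_piece_line:
  assumes R: "1 \<le> R" and x: "0 \<le> x" and t: "t \<le> nat \<lfloor>x\<rfloor> + 1"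
  shows "lam R x \<le> piece_line R t x"
proof -
  define n where "n = nat \<lfloor>x\<rfloor>"
  define th where "th = x - of_int \<lfloor>x\<rfloor>"
  define q where "q = 1 - 1/R"
  have xe: "x = real n + th" and th: "0 \<le> th" "th < 1"
    using floor_decomposition[OF x] n_def th_def by auto
  have q0: "0 \<le> q" using ratio_bounds[OF R] q_def by auto
  have Rp: "0 < R" using R by simp
  have lam_x: "lam R x = 1 - q ^ n * (1 - th / R)" unfolding lam_def n_def th_def q_def by simp
  have line_x: "piece_line R t x = 1 - q ^ t + (real n + th - real t) * q ^ t / R"
    unfolding piece_line_def q_def xe by simp
  show ?thesis
  proof (cases "t \<le> n")
    case True
    define d where "d = n - t"
    have nd: "n = t + d" using True d_def by simp
    have "1 - (real d + th) / R \<le> q ^ d * (1 - th / R)"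
      unfolding q_def using bernoulli_ratio[OF R] th by simp
    then have "q ^ t * (1 - (real d + th) / R) \<le> q ^ t * (q ^ d * (1 - th / R))"
      using q0 by (simp add: mult_left_mono)
    then have "q ^ t * (1 - (real d + th) / R) \<le> q ^ n * (1 - th / R)"
      by (simp add: nd power_add mult.assoc)
    then show ?thesis unfolding lam_x line_x using nd by (simp add: field_simps)
  next
    case False
    then have tn: "t = n + 1" using t n_def by simp
    have "q * (1 - (th - 1) / R) - (1 - th / R) = - (1 - th) / (R * R)"
      unfolding q_def using Rp by (simp add: field_simps)
    also have "\<dots> \<le> 0" using th Rp by (simp add: divide_nonpos_pos)
    finally have "q ^ n * (q * (1 - (th - 1) / R)) \<le> q ^ n * (1 - th / R)"
      using q0 by (simp add: mult_left_mono)
    then have "q ^ t * (1 - (th - 1) / R) \<le> q ^ n * (1 - th / R)"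
      by (simp add: tn algebra_simps)
    then show ?thesis unfolding lam_x line_x using tn by (simp add: field_simps)
  qed
qed

lemma lam_lipschitz:
  assumes R: "1 \<le> R" and y: "0 \<le> y" and yx: "y \<le> x"
  shows "lam R x - lam R y \<le> (x - y) / R"
proof -
  have x: "0 \<le> x" using y yx by simp
  have "nat \<lfloor>y\<rfloor> \<le> nat \<lfloor>x\<rfloor> + 1" using yx by (simp add: floor_mono nat_mono le_SucI)
  then have "lam R x \<le> piece_line R (nat \<lfloor>y\<rfloor>) x" by (rule lam_le_piece_line[OF R x])
  also have "\<dots> = lam R y + (x - y) * (1 - 1/R) ^ nat \<lfloor>y\<rfloor> / R"
    using piece_line_shift[of R "nat \<lfloor>y\<rfloor>" x y] lam_eq_piece_line[OF y] by simp
  also have "\<dots> \<le> lam R y + (x - y) / R"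
  proof -
    have "(1 - 1/R) ^ nat \<lfloor>y\<rfloor> \<le> 1" using ratio_bounds[OF R] by (simp add: power_le_one)
    then have "(x - y) * (1 - 1/R) ^ nat \<lfloor>y\<rfloor> \<le> x - y" using yx by (simp add: mult_left_le)
    then show ?thesis using R by (simp add: divide_right_mono)
  qed
  finally show ?thesis by simp
qed

lemma lam_mono:
  assumes R: "1 \<le> R" and y: "0 \<le> y" and yx: "y \<le> x"
  shows "lam R y \<le> lam R x"
proof -
  have x: "0 \<le> x" using y yx by simp
  define q where "q = 1 - 1/R"
  have q0: "0 \<le> q" and q1: "q \<le> 1" using ratio_bounds[OF R] q_def by auto
  have Rp: "0 < R" using R by simp
  define n where "n = nat \<lfloor>x\<rfloor>"
  define th where "th = x - of_int \<lfloor>x\<rfloor>"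
  define m where "m = nat \<lfloor>y\<rfloor>"
  define ph where "ph = y - of_int \<lfloor>y\<rfloor>"
  have xe: "x = real n + th" and th: "0 \<le> th" "th < 1"
    using floor_decomposition[OF x] n_def th_def by auto
  have ye: "y = real m + ph" and ph: "0 \<le> ph" "ph < 1"
    using floor_decomposition[OF y] m_def ph_def by auto
  have lam_x: "lam R x = 1 - q ^ n * (1 - th / R)" unfolding lam_def n_def th_def q_def by simp
  have lam_y: "lam R y = 1 - q ^ m * (1 - ph / R)" unfolding lam_def m_def ph_def q_def by simp
  have mn: "m \<le> n" unfolding m_def n_def using yx by (simp add: floor_mono nat_mono)
  show ?thesis
  proof (cases "m = n")
    case True
    then have "ph \<le> th" using xe ye yx by simp
    then have "1 - th / R \<le> 1 - ph / R" using Rp by (simp add: divide_right_mono)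
    then have "q ^ n * (1 - th / R) \<le> q ^ m * (1 - ph / R)"
      using True q0 by (simp add: mult_left_mono)
    then show ?thesis unfolding lam_x lam_y by simp
  next
    case False
    then have "Suc m \<le> n" using mn by simp
    then have pow: "q ^ n \<le> q ^ m * q" using q0 q1 power_decreasing[of "Suc m" n q]
      by (simp add: mult.commute)
    have "0 \<le> 1 - th / R" "1 - th / R \<le> 1" using th Rp R by (auto simp: field_simps)
    then have "q ^ n * (1 - th / R) \<le> q ^ n" using q0 by (simp add: mult_left_le)
    also have "\<dots> \<le> q ^ m * q" by (rule pow)
    also have "\<dots> \<le> q ^ m * (1 - ph / R)"
    proof -
      have "q \<le> 1 - ph / R" unfolding q_def using ph Rp by (simp add: divide_right_mono)
      then show ?thesis using q0 by (simp add: mult_left_mono)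
    qed
    finally show ?thesis unfolding lam_x lam_y by simp
  qed
qed

lemma lam_tangent_gap_identity:
  assumes R: "1 \<le> R" and s: "0 \<le> s"
  shows "(1 - 1/R) ^ (nat \<lfloor>s\<rfloor> + 1) + R * (piece_line R (nat \<lfloor>s\<rfloor> + 1) s - lam R s) + lam R s = 1"
proof -
  define q where "q = 1 - 1/R"
  define n where "n = nat \<lfloor>s\<rfloor>"
  define th where "th = s - of_int \<lfloor>s\<rfloor>"
  have se: "s = real n + th" using floor_decomposition[OF s] n_def th_def by auto
  have lam_s: "lam R s = 1 - q ^ n * (1 - th / R)" unfolding lam_def n_def th_def q_def by simp
  have line_s: "piece_line R (n + 1) s = 1 - q ^ (n+1) + (real n + th - real (n+1)) * q ^ (n+1) / R"
    unfolding piece_line_def q_def se by simp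
  have "R \<noteq> 0" using R by simp
  then show ?thesis unfolding n_def[symmetric] q_def[symmetric] lam_s line_s
    by (simp add: q_def field_simps)
qed

lemma lam_excess_over_level:
  assumes R: "1 \<le> R" and z: "0 \<le> z" and sg: "0 \<le> sg"
  shows "lam R z - lam R (min z sg) \<le> (1 - 1/R) ^ (nat \<lfloor>sg\<rfloor> + 1) / R * max (z - sg) 0
           + (piece_line R (nat \<lfloor>sg\<rfloor> + 1) sg - lam R sg)"
proof (cases "z \<le> sg")
  case True
  have "lam R sg \<le> piece_line R (nat \<lfloor>sg\<rfloor> + 1) sg" by (rule lam_le_piece_line[OF R sg]) simp
  moreover have "0 \<le> (1 - 1/R) ^ (nat \<lfloor>sg\<rfloor> + 1) / R * max (z - sg) 0"
    using ratio_bounds[OF R] R by simp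
  ultimately show ?thesis using True by simp
next
  case False
  have "nat \<lfloor>sg\<rfloor> + 1 \<le> nat \<lfloor>z\<rfloor> + 1" using False by (simp add: floor_mono nat_mono)
  then have "lam R z \<le> piece_line R (nat \<lfloor>sg\<rfloor> + 1) z" by (rule lam_le_piece_line[OF R z])
  then show ?thesis using False piece_line_shift[of R "nat \<lfloor>sg\<rfloor> + 1" z sg]
    by (simp add: mult.commute)
qed

definition lam_drop :: "real \<Rightarrow> 'b set \<Rightarrow> ('b \<Rightarrow> real) \<Rightarrow> ('b \<Rightarrow> real) \<Rightarrow> real" where
  "lam_drop R K s s' = (\<Sum>j\<in>K. lam R (s j) - lam R (s' j))"

definition budget_step :: "real \<Rightarrow> 'b set \<Rightarrow> 'b set \<Rightarrow> ('b \<Rightarrow> real) \<Rightarrow> ('b \<Rightarrow> real) \<Rightarrow> bool" where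
  "budget_step R K J s s' \<longleftrightarrow>
     (\<forall>j\<in>K. 0 \<le> s' j \<and> s' j \<le> s j) \<and> sum s' K \<le> max (sum s K - R) 0 \<and>
     lam_drop R K s s' \<le> 1 \<and> (\<forall>l\<in>J. lam_drop R K s s' + lam R (s' l) \<le> 1)"

(* Since lam has slope at most 1/R, removing budget B lowers the coefficients by at most B/R. *)
lemma lam_drop_le:
  assumes R: "1 \<le> R" and h: "\<forall>j\<in>K. 0 \<le> s' j \<and> s' j \<le> s j"
  shows "lam_drop R K s s' \<le> (sum s K - sum s' K) / R"
proof -
  have "lam_drop R K s s' \<le> (\<Sum>j\<in>K. (s j - s' j) / R)"
    unfolding lam_drop_def by (rule sum_mono) (use h lam_lipschitz[OF R] in auto)
  also have "\<dots> = (sum s K - sum s' K) / R"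
    by (simp add: sum_divide_distrib[symmetric] sum_subtractf)
  finally show ?thesis .
qed

lemma budget_step_clear:
  assumes R: "1 \<le> R" and small: "sum s K \<le> R" and s0: "\<forall>j\<in>K. 0 \<le> s j"
  shows "budget_step R K J s (\<lambda>_. 0)"
proof -
  have h: "\<forall>j\<in>K. 0 \<le> (0::real) \<and> 0 \<le> s j" using s0 by simp
  have "lam_drop R K s (\<lambda>_. 0) \<le> (sum s K - 0) / R"
    using lam_drop_le[OF R h] by simp
  also have "\<dots> \<le> 1" using small R by simp
  finally show ?thesis using h unfolding budget_step_def by (simp add: lam_zero)
qed

(* If the columns of J carry at most R units but all columns more, remove J's budget entirely and
   scale the remaining budget down proportionally. *)
lemma budget_step_scale:
  assumes R: "1 \<le> R" and K: "finite K" and JK: "J \<subseteq> K" and s0: "\<forall>j\<in>K. 0 \<le> s j"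
    and inside: "sum s J \<le> R" and total: "R < sum s K"
  shows "\<exists>s'. budget_step R K J s s'"
proof -
  define A where "A = sum s J"
  define B where "B = sum s (K - J)"
  have AB: "sum s K = A + B" unfolding A_def B_def using K JK
    by (metis add.commute sum.subset_diff)
  have Bpos: "0 < B" and RA: "R - A < B" using inside total AB R A_def by linarith+
  define th where "th = 1 - (R - A) / B"
  have th0: "0 \<le> th" and th1: "th \<le> 1"
    unfolding th_def using RA Bpos inside A_def by (simp_all add: field_simps)
  define s' where "s' = (\<lambda>j. if j \<in> J then 0 else th * s j)"
  have h: "\<forall>j\<in>K. 0 \<le> s' j \<and> s' j \<le> s j"
    using s0 th0 th1 unfolding s'_def by (auto simp: mult_left_le_one_le)
  have "sum s' K = sum s' J + sum s' (K - J)" using K JK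
    by (metis add.commute sum.subset_diff)
  also have "\<dots> = th * B" unfolding s'_def B_def by (simp add: sum_distrib_left)
  also have "\<dots> = B - (R - A)" unfolding th_def using Bpos by (simp add: field_simps)
  finally have rest: "sum s' K = sum s K - R" using AB by simp
  have "lam_drop R K s s' \<le> (sum s K - sum s' K) / R" by (rule lam_drop_le[OF R h])
  also have "\<dots> = 1" using rest R by simp
  finally have "lam_drop R K s s' \<le> 1" .
  then have "budget_step R K J s s'"
    using h rest unfolding budget_step_def by (simp add: s'_def lam_zero)
  then show ?thesis by blast
qed

lemma truncation_level_exists:
  fixes s :: "'b \<Rightarrow> real"
  assumes J: "finite J" and s0: "\<forall>j\<in>J. 0 \<le> s j" and R0: "0 \<le> R" and big: "R < sum s J"
  obtains sg where "0 \<le> sg" "(\<Sum>j\<in>J. max (s j - sg) 0) = R"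
proof -
  define F where "F = (\<lambda>sg. \<Sum>j\<in>J. max (s j - sg) 0)"
  have F0: "F 0 = sum s J" unfolding F_def using s0 by (intro sum.cong) auto
  have "F (sum s J) = 0" unfolding F_def
  proof (intro sum.neutral ballI)
    fix j assume "j \<in> J"
    then have "s j \<le> sum s J" using J s0 by (intro member_le_sum) auto
    then show "max (s j - sum s J) 0 = 0" by simp
  qed
  moreover have "continuous_on {0..sum s J} F" unfolding F_def by (intro continuous_intros)
  ultimately obtain sg where "0 \<le> sg" "F sg = R"
    using IVT2'[of F "sum s J" R 0] F0 R0 big by auto
  then show ?thesis using that F_def by blast
qed

lemma truncation_drop_bound:
  assumes R: "1 \<le> R" and sg: "0 \<le> sg" and s0: "\<forall>j\<in>J. 0 \<le> s j"
    and cJ: "real (card J) \<le> R" and level: "(\<Sum>j\<in>J. max (s j - sg) 0) = R"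
  shows "(\<Sum>j\<in>J. lam R (s j) - lam R (min (s j) sg)) + lam R sg \<le> 1"
proof -
  define q where "q = (1 - 1/R) ^ (nat \<lfloor>sg\<rfloor> + 1)"
  define gap where "gap = piece_line R (nat \<lfloor>sg\<rfloor> + 1) sg - lam R sg"
  have gap0: "0 \<le> gap" unfolding gap_def by (simp add: lam_le_piece_line[OF R sg])
  have "(\<Sum>j\<in>J. lam R (s j) - lam R (min (s j) sg)) \<le> (\<Sum>j\<in>J. q / R * max (s j - sg) 0 + gap)"
    by (rule sum_mono) (use lam_excess_over_level[OF R _ sg] s0 in \<open>auto simp: q_def gap_def\<close>)
  also have "\<dots> = q / R * (\<Sum>j\<in>J. max (s j - sg) 0) + real (card J) * gap"
    by (simp add: sum.distrib sum_distrib_left)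
  also have "\<dots> \<le> q + R * gap" using level R cJ gap0 by (simp add: mult_right_mono)
  finally show ?thesis
    using lam_tangent_gap_identity[OF R sg] unfolding q_def gap_def by linarith
qed

(* If the columns of J carry more than R units, truncate them at the level removing exactly R. *)
lemma budget_step_truncate:
  assumes R: "1 \<le> R" and K: "finite K" and JK: "J \<subseteq> K" and s0: "\<forall>j\<in>K. 0 \<le> s j"
    and cJ: "real (card J) \<le> R" and big: "R < sum s J"
  shows "\<exists>s'. budget_step R K J s s'"
proof -
  have J: "finite J" using K JK finite_subset by blast
  obtain sg where sg: "0 \<le> sg" and level: "(\<Sum>j\<in>J. max (s j - sg) 0) = R"
    using truncation_level_exists[OF J _ _ big] s0 JK R by auto
  define s' where "s' = (\<lambda>j. if j \<in> J then min (s j) sg else s j)"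
  have h: "\<forall>j\<in>K. 0 \<le> s' j \<and> s' j \<le> s j" using s0 sg unfolding s'_def by auto
  have "sum s K - sum s' K = (\<Sum>j\<in>J. s j - s' j)"
    unfolding sum_subtractf[symmetric] using K JK
    by (intro sum.mono_neutral_right) (auto simp: s'_def)
  also have "\<dots> = R" unfolding level[symmetric] s'_def by (intro sum.cong) auto
  finally have rest: "sum s' K \<le> max (sum s K - R) 0" by simp
  have "lam_drop R K s s' = (\<Sum>j\<in>J. lam R (s j) - lam R (min (s j) sg))"
    unfolding lam_drop_def using K JK
    by (subst sum.mono_neutral_right[of K J]) (auto simp: s'_def)
  then have drop: "lam_drop R K s s' + lam R sg \<le> 1"
    using truncation_drop_bound[OF R sg _ cJ level] s0 JK by auto
  have "lam R (s' l) \<le> lam R sg" if "l \<in> J" for l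
  proof -
    have "0 \<le> min (s l) sg" using that s0 JK sg by auto
    then show ?thesis using that lam_mono[OF R] unfolding s'_def by simp
  qed
  then have "budget_step R K J s s'"
    using h rest drop lam_nonneg[OF R sg] unfolding budget_step_def by fastforce
  then show ?thesis by blast
qed

lemma budget_step_exists:
  assumes R: "1 \<le> R" and K: "finite K" and JK: "J \<subseteq> K" and cJ: "real (card J) \<le> R"
    and s0: "\<forall>j\<in>K. 0 \<le> s j"
  shows "\<exists>s'. budget_step R K J s s'"
proof (cases "R < sum s J")
  case True
  then show ?thesis using budget_step_truncate[OF R K JK s0 cJ] by blast
next
  case inside: False
  show ?thesis
  proof (cases "sum s K \<le> R")
    case True
    then show ?thesis using budget_step_clear[OF R _ s0] by blast
  next
    case False
    then show ?thesis using budget_step_scale[OF R K JK s0] inside by simp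
  qed
qed

(* An abstract charging game with columns K over n rounds: u i j is the value still held by column j
   before round i and gam i the gain of round i. *)
definition charging_game ::
    "'b set \<Rightarrow> nat \<Rightarrow> (nat \<Rightarrow> 'b set) \<Rightarrow> (nat \<Rightarrow> 'b \<Rightarrow> real) \<Rightarrow> (nat \<Rightarrow> real) \<Rightarrow> bool" where
  "charging_game K n J u gam \<longleftrightarrow> (\<forall>i<n.
     J i \<subseteq> K \<and>
     (\<forall>j\<in>K. u i j \<le> gam i) \<and>
     (\<forall>j\<in>K. u (Suc i) j \<le> u i j) \<and>
     (\<forall>j\<in>K - J i. u (Suc i) j = u i j) \<and>
     (\<Sum>j\<in>K. u i j - u (Suc i) j) \<le> gam i)"

lemma potential_step:
  fixes u u' :: "'b \<Rightarrow> real" and gam :: real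
  assumes R: "1 \<le> R" and step: "budget_step R K J s s'"
    and pay: "\<forall>j\<in>K. u j \<le> gam" and dec: "\<forall>j\<in>K. u' j \<le> u j"
    and frozen: "\<forall>j\<in>K - J. u' j = u j" and red: "(\<Sum>j\<in>K. u j - u' j) \<le> gam"
  shows "(\<Sum>j\<in>K. lam R (s j) * u j) \<le> (\<Sum>j\<in>K. lam R (s' j) * u' j) + gam"
proof -
  define D where "D = lam_drop R K s s'"
  have h: "\<forall>j\<in>K. 0 \<le> s' j \<and> s' j \<le> s j" and D1: "D \<le> 1"
    and DJ: "\<forall>l\<in>J. D + lam R (s' l) \<le> 1"
    using step unfolding budget_step_def D_def by auto
  have dropped: "(lam R (s j) - lam R (s' j)) * u j \<le> (lam R (s j) - lam R (s' j)) * gam"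
    if j: "j \<in> K" for j
  proof -
    have "0 \<le> lam R (s j) - lam R (s' j)" using h j lam_mono[OF R] by auto
    then show ?thesis using pay j by (simp add: mult_left_mono)
  qed
  have kept: "lam R (s' j) * (u j - u' j) \<le> (1 - D) * (u j - u' j)" if j: "j \<in> K" for j
  proof (cases "j \<in> J")
    case True
    then have "lam R (s' j) \<le> 1 - D" using DJ by fastforce
    moreover have "0 \<le> u j - u' j" using dec j by auto
    ultimately show ?thesis by (simp add: mult_right_mono)
  next
    case False
    then show ?thesis using frozen j by simp
  qed
  have "(\<Sum>j\<in>K. lam R (s j) * u j) = (\<Sum>j\<in>K. lam R (s' j) * u' j
      + lam R (s' j) * (u j - u' j) + (lam R (s j) - lam R (s' j)) * u j)"
    by (rule sum.cong) (auto simp: algebra_simps)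
  also have "\<dots> \<le> (\<Sum>j\<in>K. lam R (s' j) * u' j
      + (1 - D) * (u j - u' j) + (lam R (s j) - lam R (s' j)) * gam)"
    by (rule sum_mono) (use dropped kept in \<open>auto intro: add_mono\<close>)
  also have "\<dots> = (\<Sum>j\<in>K. lam R (s' j) * u' j) + (1 - D) * (\<Sum>j\<in>K. u j - u' j) + D * gam"
    by (simp add: sum.distrib sum_distrib_left sum_distrib_right D_def lam_drop_def)
  also have "\<dots> \<le> (\<Sum>j\<in>K. lam R (s' j) * u' j) + (1 - D) * gam + D * gam"
    using red D1 by (simp add: mult_left_mono)
  finally show ?thesis by (simp add: algebra_simps)
qed

lemma potential_bound:
  assumes R: "1 \<le> R" and K: "finite K" and game: "charging_game K n J u gam"
    and cJ: "\<forall>i<n. real (card (J i)) \<le> R"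
    and i: "i \<le> n" and s0: "\<forall>j\<in>K. 0 \<le> s j" and budget: "sum s K \<le> R * real (n - i)"
  shows "(\<Sum>j\<in>K. lam R (s j) * u i j) \<le> (\<Sum>l\<in>{i..<n}. gam l)"
  using i s0 budget
proof (induction "n - i" arbitrary: i s)
  case 0
  then have "\<forall>j\<in>K. s j = 0"
    using sum_nonneg_eq_0_iff[OF K] by (metis antisym mult_zero_right of_nat_0 sum_nonneg)
  moreover have "n \<le> i" using "0.hyps" by simp
  ultimately show ?case by (simp add: lam_zero)
next
  case (Suc m)
  then have i: "i < n" by simp
  have JK: "J i \<subseteq> K" and rd: "(\<Sum>j\<in>K. u i j - u (Suc i) j) \<le> gam i"
    using game i unfolding charging_game_def by auto
  obtain s' where step: "budget_step R K (J i) s s'"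
    using budget_step_exists[OF R K JK] cJ i Suc.prems by blast
  have s'0: "\<forall>j\<in>K. 0 \<le> s' j" using step unfolding budget_step_def by auto
  have "real (n - i) = real (n - Suc i) + 1" using i by simp
  then have "sum s K - R \<le> R * real (n - Suc i)" using Suc.prems(3) by (simp add: algebra_simps)
  moreover have "0 \<le> R * real (n - Suc i)" using R by simp
  ultimately have "sum s' K \<le> R * real (n - Suc i)"
    using step unfolding budget_step_def by linarith
  then have IH: "(\<Sum>j\<in>K. lam R (s' j) * u (Suc i) j) \<le> (\<Sum>l\<in>{Suc i..<n}. gam l)"
    using Suc.hyps(1)[of "Suc i" s'] Suc.hyps(2) i s'0 by simp
  have "(\<Sum>j\<in>K. lam R (s j) * u i j) \<le> (\<Sum>j\<in>K. lam R (s' j) * u (Suc i) j) + gam i"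
    using potential_step[OF R step _ _ _ rd] game i unfolding charging_game_def by blast
  also have "\<dots> \<le> (\<Sum>l\<in>{i..<n}. gam l)" using IH i by (simp add: sum.atLeast_Suc_lessThan)
  finally show ?case .
qed

lemma charging_game_bound:
  fixes r :: nat
  assumes r: "1 \<le> r" and K: "finite K" and game: "charging_game K n J u gam"
    and cJ: "\<forall>i<n. card (J i) \<le> r" and cK: "card K \<le> n"
  shows "(1 - (1 - 1 / real r) ^ r) * (\<Sum>j\<in>K. u 0 j) \<le> (\<Sum>i<n. gam i)"
proof -
  have "(\<Sum>j\<in>K. lam (real r) (real r) * u 0 j) \<le> (\<Sum>l\<in>{0..<n}. gam l)"
    by (rule potential_bound[OF _ K game]) (use r cJ cK in auto)
  then show ?thesis by (simp add: lam_of_nat sum_distrib_left atLeast0LessThan)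
qed

lemma union_of_Suc: "union_of (Suc i) g = union_of i g \<union> g i"
  unfolding union_of_def by (auto simp: lessThan_Suc)

lemma wt_mono:
  assumes "finite B" and "A \<subseteq> B" and "\<forall>x\<in>B. 0 \<le> w x"
  shows "wt w A \<le> wt w B"
  unfolding wt_def using assms by (intro sum_mono2) auto

lemma wt_union_of_telescope:
  assumes "\<forall>i<n. finite (g i)"
  shows "wt w (union_of n g) = (\<Sum>i<n. wt w (g i - union_of i g))"
  using assms
proof (induction n)
  case 0
  then show ?case unfolding union_of_def wt_def by simp
next
  case (Suc n)
  have "finite (union_of n g)" using Suc.prems unfolding union_of_def by auto
  moreover have "finite (g n - union_of n g)" using Suc.prems by auto
  ultimately have "wt w (union_of n g \<union> (g n - union_of n g))
      = wt w (union_of n g) + wt w (g n - union_of n g)"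
    unfolding wt_def by (rule sum.union_disjoint) auto
  then show ?case using Suc by (simp add: union_of_Suc Un_Diff_cancel)
qed

lemma wt_owner_classes:
  assumes "finite S" and "finite K" and "\<forall>e\<in>S. own e \<in> K"
  shows "wt w S = (\<Sum>j\<in>K. wt w {e\<in>S. own e = j})"
  unfolding wt_def using assms by (intro sum.group[symmetric]) auto

lemma wt_diff_gain:
  assumes "finite A" and "finite C" and "\<forall>x\<in>C. 0 \<le> w x"
  shows "wt w (A - B) \<le> wt w (A - (B \<union> C)) + wt w (C - B)"
proof -
  have "wt w (A - B) = wt w ((A - (B \<union> C)) \<union> ((A - B) \<inter> C))"
    by (rule arg_cong[where f = "wt w"]) auto
  also have "\<dots> = wt w (A - (B \<union> C)) + wt w ((A - B) \<inter> C)"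
    unfolding wt_def using assms by (intro sum.union_disjoint) auto
  also have "wt w ((A - B) \<inter> C) \<le> wt w (C - B)"
    using assms by (intro wt_mono) auto
  finally show ?thesis by simp
qed

lemma class_decrease_le_gain:
  assumes A: "finite A" and C: "finite C" and w: "\<forall>x\<in>C. 0 \<le> w x"
    and K: "finite K" and own: "\<forall>e\<in>A. own e \<in> K"
  shows "(\<Sum>j\<in>K. wt w ({e\<in>A. own e = j} - B) - wt w ({e\<in>A. own e = j} - (B \<union> C)))
           \<le> wt w (C - B)"
proof -
  have classes: "wt w (A - X) = (\<Sum>j\<in>K. wt w ({e\<in>A. own e = j} - X))" for X
    using wt_owner_classes[of "A - X" K own w] A K own
    by (auto intro: arg_cong[where f = "wt w"] sum.cong)
  have "(\<Sum>j\<in>K. wt w ({e\<in>A. own e = j} - B) - wt w ({e\<in>A. own e = j} - (B \<union> C)))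
      = wt w (A - B) - wt w (A - (B \<union> C))"
    unfolding classes by (simp add: sum_subtractf)
  also have "\<dots> \<le> wt w (C - B)" using wt_diff_gain[OF A C w, of B] by linarith
  finally show ?thesis .
qed

lemma first_cover_unique:
  assumes "e \<in> g i - union_of i g" and "e \<in> g i' - union_of i' g"
  shows "i = i'"
  using assms unfolding union_of_def by (cases i i' rule: linorder_cases) auto

definition owner_map ::
    "nat \<Rightarrow> (nat \<Rightarrow> 'a set) \<Rightarrow> (nat \<Rightarrow> 'a set) \<Rightarrow> (nat \<Rightarrow> nat set) \<Rightarrow> ('a \<Rightarrow> nat) \<Rightarrow> bool" where
  "owner_map k g ob J own \<longleftrightarrow> (\<forall>e\<in>union_of k ob. own e < k \<and> e \<in> ob (own e) \<and>
      (\<forall>i<k. e \<in> g i - union_of i g \<longrightarrow> own e \<in> J i))"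

lemma owner_exists:
  assumes cover: "\<forall>i<k. J i \<subseteq> {..<k} \<and> g i \<inter> union_of k ob \<subseteq> (\<Union>j\<in>J i. ob j)"
  obtains own where "owner_map k g ob J own"
proof -
  have "\<exists>j. j < k \<and> e \<in> ob j \<and> (\<forall>i<k. e \<in> g i - union_of i g \<longrightarrow> j \<in> J i)"
    if e: "e \<in> union_of k ob" for e
  proof (cases "\<exists>i<k. e \<in> g i - union_of i g")
    case True
    then obtain i where i: "i < k" "e \<in> g i - union_of i g" by blast
    then obtain j where "j \<in> J i" "e \<in> ob j" using cover e by blast
    then show ?thesis using i cover first_cover_unique[OF i(2)] by blast
  next
    case False
    then show ?thesis using e unfolding union_of_def by blast
  qed
  then show ?thesis using that unfolding owner_map_def by metis
qed

(* A greedy run with an owner function is a charging game: the columns are the owner classes,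
   and the greediness of g i bounds every class's uncovered weight by the gain of round i. *)
lemma greedy_charging_game:
  assumes U: "finite U" and wnn: "\<forall>x\<in>U. 0 \<le> w x" and sub: "\<forall>S\<in>R. S \<subseteq> U"
    and greedy: "greedy_run R k w g" and ob: "is_choice R k ob"
    and J: "\<forall>i<k. J i \<subseteq> {..<k}" and own: "owner_map k g ob J own"
  defines "u \<equiv> \<lambda>i j. wt w ({e\<in>union_of k ob. own e = j} - union_of i g)"
    and "gam \<equiv> \<lambda>i. wt w (g i - union_of i g)"
  shows "charging_game {..<k} k J u gam"
  unfolding charging_game_def
proof (intro allI impI)
  fix i assume i: "i < k"
  define Opt where "Opt = union_of k ob"
  define P where "P = (\<lambda>j. {e\<in>Opt. own e = j})"
  define G where "G = union_of i g"
  define G' where "G' = union_of (Suc i) g"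
  have gU: "g i \<subseteq> U" and best: "\<forall>S\<in>R. wt w (S - G) \<le> wt w (g i - G)"
    using greedy i sub unfolding greedy_run_def G_def by auto
  have G': "G' = G \<union> g i" unfolding G_def G'_def by (rule union_of_Suc)
  have OptU: "Opt \<subseteq> U" using ob sub unfolding Opt_def union_of_def is_choice_def by blast
  have mono: "wt w A \<le> wt w B" if "A \<subseteq> B" "B \<subseteq> U" for A B
    using wt_mono[OF finite_subset[OF that(2) U] that(1)] wnn that(2) by blast
  have pay: "wt w (P j - G) \<le> wt w (g i - G)" if j: "j \<in> {..<k}" for j
  proof -
    have "wt w (P j - G) \<le> wt w (ob j - G)"
      using own ob sub j unfolding P_def Opt_def owner_map_def is_choice_def by (intro mono) auto
    also have "\<dots> \<le> wt w (g i - G)" using best ob j unfolding is_choice_def by auto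
    finally show ?thesis .
  qed
  have dec: "wt w (P j - G') \<le> wt w (P j - G)" for j
    using OptU unfolding G' P_def by (intro mono) auto
  have frozen: "P j - G' = P j - G" if "j \<notin> J i" for j
    using that own i unfolding G' P_def Opt_def G_def owner_map_def by auto
  have red: "(\<Sum>j<k. wt w (P j - G) - wt w (P j - G')) \<le> wt w (g i - G)"
    unfolding P_def G' using class_decrease_le_gain[of Opt "g i" w "{..<k}" own G] own gU wnn
      finite_subset[OF OptU U] finite_subset[OF gU U] unfolding Opt_def owner_map_def by auto
  have u_eq: "u i = (\<lambda>j. wt w (P j - G))" "u (Suc i) = (\<lambda>j. wt w (P j - G'))"
    and gam_eq: "gam i = wt w (g i - G)"
    unfolding u_def gam_def P_def Opt_def G_def G'_def by simp_all
  show "J i \<subseteq> {..<k} \<and> (\<forall>j\<in>{..<k}. u i j \<le> gam i) \<and> (\<forall>j\<in>{..<k}. u (Suc i) j \<le> u i j) \<and>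
      (\<forall>j\<in>{..<k} - J i. u (Suc i) j = u i j) \<and> (\<Sum>j\<in>{..<k}. u i j - u (Suc i) j) \<le> gam i"
    unfolding u_eq gam_eq using J i pay dec frozen red by auto
qed

lemma greedy_vs_owned_solution:
  fixes r :: nat
  assumes U: "finite U" and wnn: "\<forall>x\<in>U. 0 \<le> w x" and sub: "\<forall>S\<in>R. S \<subseteq> U"
    and greedy: "greedy_run R k w g" and ob: "is_choice R k ob" and r: "1 \<le> r"
    and J: "\<forall>i<k. J i \<subseteq> {..<k} \<and> card (J i) \<le> r" and own: "owner_map k g ob J own"
  shows "(1 - (1 - 1 / real r) ^ r) * wt w (union_of k ob) \<le> wt w (union_of k g)"
proof -
  define u where "u = (\<lambda>i j. wt w ({e\<in>union_of k ob. own e = j} - union_of i g))"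
  define gam where "gam = (\<lambda>i. wt w (g i - union_of i g))"
  have "charging_game {..<k} k J u gam"
    unfolding u_def gam_def by (rule greedy_charging_game[OF U wnn sub greedy ob _ own]) (use J in simp)
  then have "(1 - (1 - 1 / real r) ^ r) * (\<Sum>j<k. u 0 j) \<le> (\<Sum>i<k. gam i)"
    by (rule charging_game_bound[OF r finite_lessThan]) (use J in simp_all)
  moreover have "(\<Sum>j<k. u 0 j) = wt w (union_of k ob)"
  proof -
    have "union_of k ob \<subseteq> U" using ob sub unfolding union_of_def is_choice_def by blast
    then have "finite (union_of k ob)" using U finite_subset by blast
    moreover have "\<forall>e\<in>union_of k ob. own e \<in> {..<k}" using own unfolding owner_map_def by simp
    moreover have "u 0 = (\<lambda>j. wt w {e\<in>union_of k ob. own e = j})"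
      unfolding u_def by (simp add: union_of_def)
    ultimately show ?thesis using wt_owner_classes[of "union_of k ob" "{..<k}" own w] by simp
  qed
  moreover have "(\<Sum>i<k. gam i) = wt w (union_of k g)"
  proof -
    have "\<forall>i<k. finite (g i)" using greedy sub U finite_subset unfolding greedy_run_def by metis
    then show ?thesis unfolding gam_def by (rule wt_union_of_telescope[symmetric])
  qed
  ultimately show ?thesis by simp
qed

(* The approximation guarantee: covering multiplicity provides an optimal solution with an owner
   function for the greedy run, and all optimal solutions have the same weight. *)
theorem theorem4p1:
  fixes U :: "'a set" and R :: "'a set set" and k r :: nat and w :: "'a \<Rightarrow> real"
    and g opt :: "nat \<Rightarrow> 'a set"
  assumes "mc_instance U R k w"
    and "0 < r"
    and "covering_multiplicity R k w r"
    and "greedy_run R k w g"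
    and "is_optimal R k w opt"
  shows "wt w (union_of k g) \<ge> (1 - (1 - 1 / real r) ^ r) * wt w (union_of k opt)"
proof -
  have U: "finite U" and sub: "\<forall>S\<in>R. S \<subseteq> U" and wnn: "\<forall>x\<in>U. 0 \<le> w x"
    using assms(1) unfolding mc_instance_def by auto
  have "is_choice R k g" using assms(4) unfolding greedy_run_def is_choice_def by auto
  then obtain ob where ob_opt: "is_optimal R k w ob" and "\<forall>i<k. \<exists>J. J \<subseteq> {..<k} \<and> card J \<le> r \<and>
      g i \<inter> union_of k ob \<subseteq> (\<Union>j\<in>J. ob j)"
    using assms(3) unfolding covering_multiplicity_def by blast
  then obtain J where J: "\<forall>i<k. J i \<subseteq> {..<k} \<and> card (J i) \<le> r \<and>
      g i \<inter> union_of k ob \<subseteq> (\<Union>j\<in>J i. ob j)" by metis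
  then obtain own where own: "owner_map k g ob J own" using owner_exists[of k J g ob] by blast
  have "is_choice R k ob" using ob_opt unfolding is_optimal_def by simp
  moreover have "1 \<le> r" using assms(2) by simp
  moreover have "\<forall>i<k. J i \<subseteq> {..<k} \<and> card (J i) \<le> r" using J by blast
  ultimately have "(1 - (1 - 1 / real r) ^ r) * wt w (union_of k ob) \<le> wt w (union_of k g)"
    using greedy_vs_owned_solution[OF U wnn sub assms(4) _ _ _ own] by blast
  moreover have "wt w (union_of k ob) = wt w (union_of k opt)"
    using ob_opt assms(5) unfolding is_optimal_def by (meson antisym)
  ultimately show ?thesis by simp
qed

end
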